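(* Let $T$ be a finite tree rooted at a vertex $r$, and let $\omega: V(T)\to [0,\infty)$ be a nonnegative weight function with $\omega(T)=\sum_{v\in V(T)}\omega(v)=1$. Then at least one of the following holds: (i) there is a vertex $u\in V(T)$ such that the unique $(r,u)$-path $P$ in $T$ satisfies $\omega(P)\ge \frac13$; (ii) there exist unrelated sets $A,B\subseteq V(T)$ with $\omega(A)\ge\frac13$ and $\omega(B)\ge\frac13$. Moreover, the constant $\frac13$ is best possible: for every real $c>\frac13$ there exist a finite tree $T$ rooted at $r$ and a nonnegative weight function $\omega$ on $V(T)$ with $\omega(T)=1$ such that every $(r,u)$-path $P$ ($u\in V(T)$) has $\omega(P)<c$ and every pair of unrelated sets $A,B\subseteq V(T)$ has $\min\{\omega(A),\omega(B)\}<c$.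
   Context: Let $T$ be a tree rooted at $r$. A vertex $y$ is a descendant of a vertex $x$ if $x$ lies on the unique $(r,y)$-path in $T$ (so every vertex is a descendant of itself). Two vertices of $T$ are related if one is a descendant of the other; otherwise they are unrelated. Two subsets $A,B\subseteq V(T)$ are unrelated if every $a\in A$ and every $b\in B$ are unrelated (in particular $A\cap B=\emptyset$). For $S\subseteq V(T)$, $\omega(S)=\sum_{s\in S}\omega(s)$, and for a subgraph $H$ of $T$, $\omega(H)=\omega(V(H))$. *)

theory Defs
  imports Complex_Main
begin

text \<open>A finite rooted tree is represented by its finite vertex set V, its root r and
  a parent function: the parent of the root is the root itself, every other vertex has
  its parent in V, and iterating the parent map from any vertex reaches the root.
  (The tree edges are the pairs {v, parent v} for v in V - {r}.)\<close>
definition rooted_tree :: "'a set \<Rightarrow> 'a \<Rightarrow> ('a \<Rightarrow> 'a) \<Rightarrow> bool" where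
  "rooted_tree V r par \<longleftrightarrow> finite V \<and> r \<in> V \<and> par r = r \<and>
     (\<forall>v\<in>V. par v \<in> V) \<and> (\<forall>v\<in>V. \<exists>n. (par ^^ n) v = r)"

text \<open>y is a descendant of x: x lies on the unique (r,y)-path, i.e. x is reached from y
  by going upwards (every vertex is a descendant of itself).\<close>
definition descendant :: "'a set \<Rightarrow> ('a \<Rightarrow> 'a) \<Rightarrow> 'a \<Rightarrow> 'a \<Rightarrow> bool" where
  "descendant V par y x \<longleftrightarrow> x \<in> V \<and> y \<in> V \<and> (\<exists>n. (par ^^ n) y = x)"

definition related :: "'a set \<Rightarrow> ('a \<Rightarrow> 'a) \<Rightarrow> 'a \<Rightarrow> 'a \<Rightarrow> bool" where
  "related V par x y \<longleftrightarrow> descendant V par x y \<or> descendant V par y x"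

definition unrelated_sets :: "'a set \<Rightarrow> ('a \<Rightarrow> 'a) \<Rightarrow> 'a set \<Rightarrow> 'a set \<Rightarrow> bool" where
  "unrelated_sets V par A B \<longleftrightarrow> (\<forall>a\<in>A. \<forall>b\<in>B. \<not> related V par a b)"

definition root_path :: "'a set \<Rightarrow> ('a \<Rightarrow> 'a) \<Rightarrow> 'a \<Rightarrow> 'a set" where
  "root_path V par u = {x \<in> V. descendant V par u x}"

definition weighting :: "'a set \<Rightarrow> ('a \<Rightarrow> real) \<Rightarrow> bool" where
  "weighting V w \<longleftrightarrow> (\<forall>v\<in>V. w v \<ge> 0) \<and> sum w V = 1"

end

theory Submission
  imports Defs
begin

text \<open>Call X \<subseteq> V a path cut if it is closed under taking parents and all its vertices that
  have a descendant outside X lie on a single root path (the initial segments of depth-first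
  orders are of this kind). A path cut X \<noteq> V can be grown by a vertex v whose (r,v)-path
  contains the frontier of X. Take a maximal path cut X of weight at most 2/3 and such a v, so
  that X \<union> {v} weighs more than 2/3. If every root path weighs less than 1/3, then
  A = X minus the (r,v)-path weighs more than 1/3, B = V - X weighs at least 1/3, and no vertex of
  B is a descendant or an ancestor of a vertex of A. A star with three leaves of weight 1/3 shows
  that 1/3 is optimal.\<close>

lemma funpow_closed:
  assumes "\<forall>x\<in>X. f x \<in> X" and "x \<in> X"
  shows "(f ^^ n) x \<in> X"
  using assms by (induction n) auto

lemma descendant_refl: "y \<in> V \<Longrightarrow> descendant V par y y"
  unfolding descendant_def by (auto intro: exI[of _ 0])

lemma descendant_trans:
  assumes "descendant V par z y" and "descendant V par y x"
  shows "descendant V par z x"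
proof -
  obtain m n where "(par ^^ m) z = y" and "(par ^^ n) y = x"
    using assms unfolding descendant_def by blast
  then have "(par ^^ (n + m)) z = x" by (simp add: funpow_add)
  then show ?thesis using assms unfolding descendant_def by blast
qed

lemma descendant_parent: "v \<in> V \<Longrightarrow> par v \<in> V \<Longrightarrow> descendant V par v (par v)"
  unfolding descendant_def by (auto intro: exI[of _ 1])

definition upward_closed :: "'a set \<Rightarrow> ('a \<Rightarrow> 'a) \<Rightarrow> 'a set \<Rightarrow> bool" where
  "upward_closed V par X \<longleftrightarrow> X \<subseteq> V \<and> (\<forall>x\<in>X. par x \<in> X)"

definition tree_frontier :: "'a set \<Rightarrow> ('a \<Rightarrow> 'a) \<Rightarrow> 'a set \<Rightarrow> 'a set" where
  "tree_frontier V par X = {x \<in> X. \<exists>y\<in>V - X. descendant V par y x}"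

definition path_cut :: "'a set \<Rightarrow> ('a \<Rightarrow> 'a) \<Rightarrow> 'a set \<Rightarrow> bool" where
  "path_cut V par X \<longleftrightarrow>
     upward_closed V par X \<and> (\<exists>u\<in>V. tree_frontier V par X \<subseteq> root_path V par u)"

lemma upward_closed_ancestor:
  assumes "upward_closed V par X" and "x \<in> X" and "descendant V par x y"
  shows "y \<in> X"
  using assms funpow_closed[of X par x] unfolding upward_closed_def descendant_def by blast

lemma unrelated_off_frontier:
  assumes "upward_closed V par X" and "tree_frontier V par X \<subseteq> P"
  shows "unrelated_sets V par (X - P) (V - X)"
  unfolding unrelated_sets_def related_def
proof (intro ballI notI)
  fix a b assume a: "a \<in> X - P" and b: "b \<in> V - X"
    and "descendant V par a b \<or> descendant V par b a"
  then consider "descendant V par a b" | "descendant V par b a" by blast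
  then show False
  proof cases
    case 1
    then show False using upward_closed_ancestor[OF assms(1)] a b by blast
  next
    case 2
    then have "a \<in> tree_frontier V par X" using a b unfolding tree_frontier_def by blast
    then show False using a assms(2) by blast
  qed
qed

context
  fixes V :: "'a set" and r :: 'a and par :: "'a \<Rightarrow> 'a"
  assumes tree: "rooted_tree V r par"
begin

lemma parent_in: "\<forall>v\<in>V. par v \<in> V"
  using tree unfolding rooted_tree_def by blast

lemma funpow_parent_root [simp]: "(par ^^ m) r = r"
  using tree by (induction m) (simp_all add: rooted_tree_def)

lemma periodic_vertex_is_root:
  assumes "x \<in> V" and period: "(par ^^ Suc p) x = x"
  shows "x = r"
proof -
  obtain n where n: "(par ^^ n) x = r" using tree \<open>x \<in> V\<close> unfolding rooted_tree_def by blast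
  have "(par ^^ (Suc p * k)) x = x" for k
  proof (induction k)
    case (Suc k)
    then show ?case by (simp only: mult_Suc_right funpow_add comp_apply period)
  qed simp
  moreover have "n * Suc p - n + n = Suc p * n" by simp
  ultimately have "x = (par ^^ (n * Suc p - n + n)) x" by metis
  also have "\<dots> = (par ^^ (n * Suc p - n)) r" by (simp add: funpow_add n)
  finally show ?thesis by simp
qed

lemma descendant_antisym:
  assumes "descendant V par x y" and "descendant V par y x"
  shows "x = y"
proof -
  obtain m n where m: "(par ^^ m) x = y" and n: "(par ^^ n) y = x"
    using assms unfolding descendant_def by blast
  then have cycle: "(par ^^ (n + m)) x = x" by (simp add: funpow_add)
  show ?thesis
  proof (cases "n + m")
    case 0
    then show ?thesis using m by simp
  next
    case (Suc p)
    then have "x = r" using periodic_vertex_is_root cycle assms unfolding descendant_def by auto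
    then show ?thesis using m by simp
  qed
qed

lemma child_on_path:
  assumes "descendant V par y x" and "y \<noteq> x"
  obtains v where "v \<noteq> x" and "par v = x" and "descendant V par y v"
proof -
  have ex: "\<exists>m. (par ^^ m) y = x" using assms unfolding descendant_def by blast
  define m where "m = (LEAST m. (par ^^ m) y = x)"
  have m: "(par ^^ m) y = x" unfolding m_def by (rule LeastI_ex[OF ex])
  have "m \<noteq> 0" using m assms by (auto intro: Nat.gr0I)
  then obtain k where k: "m = Suc k" using not0_implies_Suc by blast
  have "(par ^^ k) y \<noteq> x" using Least_le[of "\<lambda>m. (par ^^ m) y = x" k] k unfolding m_def by auto
  moreover have "par ((par ^^ k) y) = x" using m k by simp
  moreover have "descendant V par y ((par ^^ k) y)"
    using assms funpow_closed[OF parent_in] unfolding descendant_def by blast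
  ultimately show ?thesis using that by blast
qed

lemma deepest_on_root_path:
  assumes "S \<subseteq> root_path V par u" and "S \<noteq> {}"
  shows "\<exists>b\<in>S. \<forall>x\<in>S. descendant V par b x"
proof -
  have ex: "\<exists>k. (par ^^ k) u \<in> S"
    using assms unfolding root_path_def descendant_def by blast
  define k where "k = (LEAST k. (par ^^ k) u \<in> S)"
  have b: "(par ^^ k) u \<in> S" unfolding k_def by (rule LeastI_ex[OF ex])
  have "descendant V par ((par ^^ k) u) x" if "x \<in> S" for x
  proof -
    obtain j where j: "(par ^^ j) u = x"
      using \<open>x \<in> S\<close> assms(1) unfolding root_path_def descendant_def by blast
    have "k \<le> j" unfolding k_def using j \<open>x \<in> S\<close> by (auto intro: Least_le)
    then have "(par ^^ (j - k)) ((par ^^ k) u) = x"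
      using j by (simp flip: funpow_add comp_apply[of "par ^^ (j - k)"])
    then show ?thesis using b \<open>x \<in> S\<close> assms(1) unfolding root_path_def descendant_def by blast
  qed
  then show ?thesis using b by blast
qed

lemma path_cut_empty: "path_cut V par {}"
  using tree unfolding path_cut_def upward_closed_def tree_frontier_def rooted_tree_def by auto

lemma path_cut_extend:
  assumes cut: "path_cut V par X" and "X \<noteq> V"
  obtains v where "v \<in> V - X" and "path_cut V par (insert v X)"
    and "tree_frontier V par X \<subseteq> root_path V par v"
proof (cases "X = {}")
  case True
  have "path_cut V par {r}"
    using tree descendant_refl[of r V par]
    unfolding path_cut_def upward_closed_def tree_frontier_def root_path_def rooted_tree_def
    by auto
  moreover have "r \<in> V" using tree unfolding rooted_tree_def by blast
  ultimately show ?thesis using that True unfolding tree_frontier_def by auto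
next
  case False
  have up: "upward_closed V par X" using cut unfolding path_cut_def by blast
  obtain u where "tree_frontier V par X \<subseteq> root_path V par u"
    using cut unfolding path_cut_def by blast
  moreover have "r \<in> tree_frontier V par X"
  proof -
    obtain x where "x \<in> X" using False by blast
    moreover obtain n where "(par ^^ n) x = r"
      using tree \<open>x \<in> X\<close> up unfolding rooted_tree_def upward_closed_def by blast
    ultimately have "r \<in> X"
      using up funpow_closed[of X par x n] unfolding upward_closed_def by metis
    obtain y where "y \<in> V - X" using \<open>X \<noteq> V\<close> up unfolding upward_closed_def by blast
    moreover have "descendant V par y r"
      using tree \<open>y \<in> V - X\<close> unfolding rooted_tree_def descendant_def by blast
    ultimately show ?thesis using \<open>r \<in> X\<close> unfolding tree_frontier_def by blast
  qed
  ultimately obtain b where b: "b \<in> tree_frontier V par X"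
    and deepest: "\<forall>x\<in>tree_frontier V par X. descendant V par b x"
    using deepest_on_root_path by blast
  then obtain y where y: "y \<in> V - X" and "descendant V par y b"
    unfolding tree_frontier_def by blast
  moreover have "y \<noteq> b" using y b unfolding tree_frontier_def by blast
  ultimately obtain v where "v \<noteq> b" and pv: "par v = b" and yv: "descendant V par y v"
    using child_on_path by blast
  have "v \<in> V" using yv unfolding descendant_def by blast
  then have vb: "descendant V par v b"
    using pv parent_in descendant_parent[of v V par] by blast
  have "v \<notin> X"
  proof
    assume "v \<in> X"
    then have "v \<in> tree_frontier V par X" using y yv unfolding tree_frontier_def by blast
    then have "descendant V par b v" using deepest by blast
    then show False using descendant_antisym[OF vb] \<open>v \<noteq> b\<close> by blast
  qed
  have frontier: "tree_frontier V par X \<subseteq> root_path V par v"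
  proof
    fix x assume "x \<in> tree_frontier V par X"
    then have "descendant V par v x" using deepest descendant_trans[OF vb] by blast
    then show "x \<in> root_path V par v" unfolding root_path_def descendant_def by blast
  qed
  have "path_cut V par (insert v X)"
    unfolding path_cut_def
  proof (intro conjI bexI)
    show "upward_closed V par (insert v X)"
      using up pv b \<open>v \<in> V\<close> unfolding upward_closed_def tree_frontier_def by auto
    have "tree_frontier V par (insert v X) \<subseteq> insert v (tree_frontier V par X)"
      unfolding tree_frontier_def by blast
    moreover have "v \<in> root_path V par v"
      using \<open>v \<in> V\<close> descendant_refl[of v V par] unfolding root_path_def by blast
    ultimately show "tree_frontier V par (insert v X) \<subseteq> root_path V par v"
      using frontier by blast
  qed (fact \<open>v \<in> V\<close>)
  then show ?thesis using that \<open>v \<notin> X\<close> \<open>v \<in> V\<close> frontier by blast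
qed

lemma light_root_paths_imp_heavy_unrelated_pair:
  assumes "weighting V w" and light: "\<And>u. u \<in> V \<Longrightarrow> sum w (root_path V par u) < 1/3"
  shows "\<exists>A B. A \<subseteq> V \<and> B \<subseteq> V \<and> unrelated_sets V par A B \<and> sum w A \<ge> 1/3 \<and> sum w B \<ge> 1/3"
proof -
  have fin: "finite V" using tree unfolding rooted_tree_def by blast
  have nonneg: "\<forall>v\<in>V. w v \<ge> 0" and total: "sum w V = 1"
    using assms unfolding weighting_def by auto
  define G where "G = {X. path_cut V par X \<and> sum w X \<le> 2/3}"
  have "G \<subseteq> Pow V" unfolding G_def path_cut_def upward_closed_def by blast
  then have "finite G" using fin finite_subset by blast
  moreover have "{} \<in> G" unfolding G_def using path_cut_empty by simp
  ultimately obtain X where "X \<in> G" and maximal: "\<forall>Y\<in>G. X \<subseteq> Y \<longrightarrow> X = Y"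
    using finite_has_maximal[of G] by blast
  then have cut: "path_cut V par X" and light_X: "sum w X \<le> 2/3" unfolding G_def by auto
  have up: "upward_closed V par X" using cut unfolding path_cut_def by blast
  then have "X \<subseteq> V" unfolding upward_closed_def by blast
  then have finX: "finite X" using fin finite_subset by blast
  have "X \<noteq> V" using light_X total by auto
  then obtain v where v: "v \<in> V - X" and cut_v: "path_cut V par (insert v X)"
    and frontier: "tree_frontier V par X \<subseteq> root_path V par v"
    using path_cut_extend[OF cut] by blast
  have "insert v X \<notin> G" using maximal v by blast
  then have heavy: "w v + sum w X > 2/3" using cut_v finX v unfolding G_def by auto
  define P where "P = root_path V par v"
  have finP: "finite P" and "P \<subseteq> V" unfolding P_def root_path_def using fin by auto
  have "v \<in> P" unfolding P_def root_path_def using v descendant_refl[of v V par] by blast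
  have "sum w (X \<inter> P) \<le> sum w (P - {v})"
    using finP v nonneg \<open>P \<subseteq> V\<close> by (intro sum_mono2) auto
  also have "\<dots> = sum w P - w v" using finP \<open>v \<in> P\<close> by (simp add: sum_diff1)
  finally have "sum w (X - P) \<ge> 1/3"
    using sum.Int_Diff[OF finX, of w P] heavy light[OF DiffD1[OF v]] unfolding P_def by linarith
  moreover have "sum w (V - X) \<ge> 1/3"
    using sum_diff[OF fin \<open>X \<subseteq> V\<close>, of w] total light_X by linarith
  moreover have "unrelated_sets V par (X - P) (V - X)"
    using unrelated_off_frontier[OF up frontier] unfolding P_def .
  ultimately show ?thesis
    using \<open>X \<subseteq> V\<close> by (intro exI[of _ "X - P"] exI[of _ "V - X"]) auto
qed

end

lemma unrelated_sets_disjoint: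
  assumes "unrelated_sets V par A B" and "A \<subseteq> V"
  shows "A \<inter> B = {}"
  using assms descendant_refl[of _ V par] unfolding unrelated_sets_def related_def by blast

lemma descendant_const_parent:
  "descendant V (\<lambda>_. r) y x \<longleftrightarrow> x \<in> V \<and> y \<in> V \<and> (x = y \<or> x = r)"
proof -
  have "((\<lambda>_. r) ^^ n) y = (if n = 0 then y else r)" for n
    by (induction n) auto
  then show ?thesis unfolding descendant_def by (metis One_nat_def nat.simps(3))
qed

lemma three_leaf_star_sharp:
  fixes c :: real
  assumes "c > 1/3"
  shows "\<exists>(V :: nat set) r par w. rooted_tree V r par \<and> weighting V w \<and>
           (\<forall>u\<in>V. sum w (root_path V par u) < c) \<and>
           (\<forall>A B. A \<subseteq> V \<and> B \<subseteq> V \<and> unrelated_sets V par A B \<longrightarrow> min (sum w A) (sum w B) < c)"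
proof -
  define L :: "nat set" where "L = {1, 2, 3}"
  define V :: "nat set" where "V = insert 0 L"
  define w :: "nat \<Rightarrow> real" where "w i = (if i \<in> L then 1/3 else 0)" for i
  have weight: "sum w A = card (A \<inter> L) / 3" if "A \<subseteq> V" for A
  proof -
    have "finite A" using that finite_subset unfolding V_def L_def by blast
    then show ?thesis unfolding w_def by (simp add: sum.If_cases Int_def)
  qed
  have tree: "rooted_tree V 0 (\<lambda>_. 0)"
    unfolding rooted_tree_def V_def L_def by (auto intro: exI[of _ 1])
  have "weighting V w" unfolding weighting_def V_def L_def w_def by simp
  moreover have "sum w (root_path V (\<lambda>_. 0) u) < c" if "u \<in> V" for u
  proof -
    have "root_path V (\<lambda>_. 0) u = {0, u}"
      using that unfolding root_path_def descendant_const_parent V_def by auto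
    moreover have "sum w {0, u} \<le> 1/3" by (cases "u = 0") (simp_all add: w_def L_def)
    ultimately show ?thesis using assms by simp
  qed
  moreover have "min (sum w A) (sum w B) < c"
    if "A \<subseteq> V" and "B \<subseteq> V" and "unrelated_sets V (\<lambda>_. 0) A B" for A B
  proof (rule ccontr)
    assume "\<not> min (sum w A) (sum w B) < c"
    then have "sum w A \<ge> c" and "sum w B \<ge> c" by auto
    then have "card (A \<inter> L) \<ge> 2" and "card (B \<inter> L) \<ge> 2"
      using weight[OF \<open>A \<subseteq> V\<close>] weight[OF \<open>B \<subseteq> V\<close>] assms by linarith+
    moreover have "A \<inter> B = {}" using unrelated_sets_disjoint that by blast
    then have "card (A \<inter> L) + card (B \<inter> L) = card ((A \<inter> L) \<union> (B \<inter> L))"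
      by (intro card_Un_disjoint[symmetric]) (auto simp: L_def)
    moreover have "card ((A \<inter> L) \<union> (B \<inter> L)) \<le> card L"
      by (intro card_mono) (auto simp: L_def)
    ultimately show False unfolding L_def by simp
  qed
  ultimately show ?thesis using tree by blast
qed

theorem theorem2:
  shows "(\<forall>(V :: 'a set) r par w. rooted_tree V r par \<and> weighting V w \<longrightarrow>
            (\<exists>u\<in>V. sum w (root_path V par u) \<ge> 1/3) \<or>
            (\<exists>A B. A \<subseteq> V \<and> B \<subseteq> V \<and> unrelated_sets V par A B \<and>
                    sum w A \<ge> 1/3 \<and> sum w B \<ge> 1/3))
       \<and> (\<forall>c::real. c > 1/3 \<longrightarrow>
            (\<exists>(V :: nat set) r par w. rooted_tree V r par \<and> weighting V w \<and>
               (\<forall>u\<in>V. sum w (root_path V par u) < c) \<and>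
               (\<forall>A B. A \<subseteq> V \<and> B \<subseteq> V \<and> unrelated_sets V par A B \<longrightarrow>
                      min (sum w A) (sum w B) < c)))"
proof (intro conjI allI impI)
  fix V :: "'a set" and r par w
  assume "rooted_tree V r par \<and> weighting V w"
  then have tree: "rooted_tree V r par" and weighting: "weighting V w" by auto
  show "(\<exists>u\<in>V. sum w (root_path V par u) \<ge> 1/3) \<or>
      (\<exists>A B. A \<subseteq> V \<and> B \<subseteq> V \<and> unrelated_sets V par A B \<and> sum w A \<ge> 1/3 \<and> sum w B \<ge> 1/3)"
  proof (cases "\<exists>u\<in>V. sum w (root_path V par u) \<ge> 1/3")
    case False
    then have "\<And>u. u \<in> V \<Longrightarrow> sum w (root_path V par u) < 1/3" by (auto simp: not_le)
    then show ?thesis by (intro disjI2 light_root_paths_imp_heavy_unrelated_pair[OF tree weighting])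
  qed simp
next
  fix c :: real
  assume "c > 1/3"
  then show "\<exists>(V :: nat set) r par w. rooted_tree V r par \<and> weighting V w \<and>
      (\<forall>u\<in>V. sum w (root_path V par u) < c) \<and>
      (\<forall>A B. A \<subseteq> V \<and> B \<subseteq> V \<and> unrelated_sets V par A B \<longrightarrow> min (sum w A) (sum w B) < c)"
    by (rule three_leaf_star_sharp)
qed

end
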